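(* Under the setup in the context, for every $\delta>0$, the event $$\mathcal E=\bigcup_{j=1}^{K}\bigcup_{i=1}^{\infty}\bigl\{|\tilde\mu_{j,i}-\mu_j|>U(i,\delta)\bigr\}$$ satisfies $\mathbb P(\mathcal E)\le\delta$.
   Context: There are $K$ arms. For each arm $j\in[K]=\{1,\dots,K\}$, the rewards $r_{j,1},r_{j,2},\dots$ are i.i.d. real random variables with values in a fixed interval $[a,b]$ and mean $\mu_j$, and they are $\sigma^2$-subgaussian in the sense that $\mathbb P(|r_{j,k}-\mu_j|>t)\le 2e^{-t^2/(2\sigma^2)}$ for all $t>0$; moreover empirical means satisfy $\mathbb P(|\frac1n\sum_{k=1}^n r_{j,k}-\mu_j|>t)\le 2e^{-nt^2/(2\sigma^2)}$ for all $n\ge1,t>0$. Rewards of different arms are independent. Fix integers $B\ge 1$ and $\alpha\ge 2$, and set $t_i=\alpha^i$ for $i\ge1$. For $\delta>0$ and $i\ge 1$ define $$U'(i,\delta)=\sigma\sqrt{\frac{2\log(4Kt_i^2/\delta)}{t_i}},$$ and define $U(i,\delta)$ recursively by $U(0,\delta)=b-a$ and $$U(i,\delta)=\frac{1}{2^B}\bigl[U'(i,\delta)+U(i-1,\delta)\bigr]+U'(i,\delta)\quad(i\ge1).$$ Let $\hat\mu_{j,i}=\frac1{t_i}\sum_{k=1}^{t_i}r_{j,k}$. Quantizer: for a real interval $[\ell,u]$, divide it into $2^B$ consecutive bins of equal width $(u-\ell)/2^B$; for any $x\in\mathbb R$, $Q_{[\ell,u]}(x)$ denotes the midpoint of a bin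 whose midpoint is nearest to $x$. Decoded estimates: $\tilde\mu_{j,0}$ is drawn uniformly from $[a,b]$, and for $i\ge1$, $$\tilde\mu_{j,i}=Q_{I_{j,i}}(\hat\mu_{j,i}),\qquad I_{j,i}=\bigl[\tilde\mu_{j,i-1}-U(i-1,\delta)-U'(i,\delta),\ \tilde\mu_{j,i-1}+U(i-1,\delta)+U'(i,\delta)\bigr].$$ *)

theory Defs
  imports "HOL-Probability.Probability"
begin

text \<open>Quantizer: the interval [l,u] is split into 2^B bins of equal width;
  quant l u B x is the midpoint of a bin whose midpoint is nearest to x
  (ties resolved by ARG_MIN, i.e. some nearest bin).\<close>

definition bin_mid :: "real \<Rightarrow> real \<Rightarrow> nat \<Rightarrow> nat \<Rightarrow> real" where
  "bin_mid l u B k = l + (real k + 1/2) * ((u - l) / 2 ^ B)"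

definition quant :: "real \<Rightarrow> real \<Rightarrow> nat \<Rightarrow> real \<Rightarrow> real" where
  "quant l u B x = bin_mid l u B (ARG_MIN (\<lambda>k. \<bar>x - bin_mid l u B k\<bar>) k. k < 2 ^ B)"

definition tlen :: "nat \<Rightarrow> nat \<Rightarrow> nat" where
  "tlen \<alpha> i = \<alpha> ^ i"

definition Uprime :: "real \<Rightarrow> nat \<Rightarrow> nat \<Rightarrow> real \<Rightarrow> nat \<Rightarrow> real" where
  "Uprime \<sigma> K \<alpha> \<delta> i =
     \<sigma> * sqrt (2 * ln (4 * real K * real (tlen \<alpha> i) ^ 2 / \<delta>) / real (tlen \<alpha> i))"

primrec Ufun :: "real \<Rightarrow> nat \<Rightarrow> nat \<Rightarrow> nat \<Rightarrow> real \<Rightarrow> real \<Rightarrow> real \<Rightarrow> nat \<Rightarrow> real" where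
  "Ufun \<sigma> K \<alpha> B a b \<delta> 0 = b - a"
| "Ufun \<sigma> K \<alpha> B a b \<delta> (Suc i) =
     (Uprime \<sigma> K \<alpha> \<delta> (Suc i) + Ufun \<sigma> K \<alpha> B a b \<delta> i) / 2 ^ B + Uprime \<sigma> K \<alpha> \<delta> (Suc i)"

definition emp_mean :: "nat \<Rightarrow> (nat \<Rightarrow> real) \<Rightarrow> nat \<Rightarrow> real" where
  "emp_mean \<alpha> r i = (\<Sum>k = 1..tlen \<alpha> i. r k) / real (tlen \<alpha> i)"

text \<open>Decoded estimates: dec ... x0 r i, where x0 is the initial uniform draw
  tilde mu_{j,0} and r the reward sequence of the arm.\<close>
primrec dec :: "real \<Rightarrow> nat \<Rightarrow> nat \<Rightarrow> nat \<Rightarrow> real \<Rightarrow> real \<Rightarrow> real \<Rightarrow> real \<Rightarrow> (nat \<Rightarrow> real) \<Rightarrow> nat \<Rightarrow> real" where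
  "dec \<sigma> K \<alpha> B a b \<delta> x0 r 0 = x0"
| "dec \<sigma> K \<alpha> B a b \<delta> x0 r (Suc i) =
     (let c = dec \<sigma> K \<alpha> B a b \<delta> x0 r i;
          w = Ufun \<sigma> K \<alpha> B a b \<delta> i + Uprime \<sigma> K \<alpha> \<delta> (Suc i)
      in quant (c - w) (c + w) B (emp_mean \<alpha> r (Suc i)))"

end

theory Submission
  imports Defs
begin

text \<open>On the event that every empirical mean \<open>\<hat>\<mu>\<^sub>j\<^sub>,\<^sub>i\<close> lies within \<open>U'(i,\<delta>)\<close> of \<open>\<mu>\<^sub>j\<close>,
  an induction on \<open>i\<close> shows that \<open>\<mu>\<^sub>j\<close> and \<open>\<hat>\<mu>\<^sub>j\<^sub>,\<^sub>i\<close> both lie in the quantization interval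
  \<open>I\<^sub>j\<^sub>,\<^sub>i\<close>, so quantizing costs at most half a bin width, \<open>(U(i-1,\<delta>) + U'(i,\<delta>))/2\<^sup>B\<close>;
  this is exactly the recursion defining \<open>U(i,\<delta>)\<close>. The initial guess is always within
  \<open>b - a\<close> of \<open>\<mu>\<^sub>j\<close> (almost surely). The choice of \<open>U'(i,\<delta>)\<close> makes the subgaussian tail
  of \<open>\<hat>\<mu>\<^sub>j\<^sub>,\<^sub>i\<close> equal to \<open>\<delta>/(2Kt\<^sub>i\<^sup>2) \<le> \<delta>/(K 2\<^sup>i\<^sup>+\<^sup>1)\<close>, and a union bound over the \<open>K\<close>
  arms and all epochs gives total failure probability at most \<open>\<delta>/2\<close>.\<close>

lemma bin_mid_nearest_exists:
  fixes l u x :: real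
  assumes "l \<le> x" "x \<le> u"
  shows "\<exists>k < 2 ^ B. \<bar>x - bin_mid l u B k\<bar> \<le> (u - l) / 2 ^ B / 2"
proof -
  define h where "h = (u - l) / 2 ^ B"
  have h0: "h \<ge> 0" using assms by (simp add: h_def)
  have mid: "x - bin_mid l u B k = h * ((x - l) / h - real k - 1/2)" if "h > 0" for k
    using that unfolding bin_mid_def h_def[symmetric] by (simp add: field_simps)
  show ?thesis
  proof (cases "h = 0")
    case True
    then show ?thesis using assms by (intro exI[of _ 0]) (simp add: bin_mid_def h_def)
  next
    case False
    with h0 have hp: "h > 0" by simp
    define s where "s = (x - l) / h"
    have s0: "0 \<le> s" using assms hp by (simp add: s_def)
    have sB: "s \<le> 2 ^ B" using assms hp by (simp add: s_def h_def field_simps)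
    \<comment> \<open>the bin containing \<open>x\<close>, where \<open>x = u\<close> belongs to the last bin\<close>
    define k where "k = min (nat \<lfloor>s\<rfloor>) (2 ^ B - 1)"
    have k: "k < 2 ^ B" unfolding k_def by (rule le_less_trans[OF min.cobounded2]) simp
    have floor: "real (nat \<lfloor>s\<rfloor>) \<le> s" "s < real (nat \<lfloor>s\<rfloor>) + 1" using s0 by linarith+
    have last: "real (2 ^ B - 1 :: nat) = 2 ^ B - 1" by simp
    have "real k \<le> s \<and> s \<le> real k + 1"
    proof (cases "nat \<lfloor>s\<rfloor> \<le> 2 ^ B - 1")
      case True
      then show ?thesis using floor by (simp add: k_def)
    next
      case False
      then have "2 ^ B - 1 < real (nat \<lfloor>s\<rfloor>)" using last by (metis of_nat_less_iff not_le)
      then show ?thesis using floor last sB False by (simp add: k_def)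
    qed
    then have "\<bar>s - real k - 1/2\<bar> \<le> 1/2" unfolding abs_le_iff by linarith
    then have "\<bar>x - bin_mid l u B k\<bar> \<le> h * (1/2)"
      unfolding mid[OF hp] s_def[symmetric] using hp by (simp add: abs_mult)
    with k show ?thesis by (auto simp: h_def)
  qed
qed

lemma quant_error_le:
  fixes l u x :: real
  assumes "l \<le> x" "x \<le> u"
  shows "\<bar>quant l u B x - x\<bar> \<le> (u - l) / 2 ^ B / 2"
proof -
  obtain k where k: "k < 2 ^ B" "\<bar>x - bin_mid l u B k\<bar> \<le> (u - l) / 2 ^ B / 2"
    using bin_mid_nearest_exists[OF assms] by blast
  have "\<bar>x - quant l u B x\<bar> \<le> \<bar>x - bin_mid l u B k\<bar>"
    using arg_min_least[of "{k. k < 2 ^ B}" k "\<lambda>k. \<bar>x - bin_mid l u B k\<bar>"] k(1)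
    by (auto simp: quant_def arg_min_on_def)
  with k(2) show ?thesis by linarith
qed

lemma dec_error_le_Ufun:
  assumes emp: "\<And>i. i \<ge> 1 \<Longrightarrow> \<bar>emp_mean \<alpha> r i - m\<bar> \<le> Uprime \<sigma> K \<alpha> \<delta> i"
    and x0: "\<bar>x0 - m\<bar> \<le> b - a"
  shows "\<bar>dec \<sigma> K \<alpha> B a b \<delta> x0 r i - m\<bar> \<le> Ufun \<sigma> K \<alpha> B a b \<delta> i"
proof (induction i)
  case 0
  then show ?case using x0 by simp
next
  case (Suc i)
  define c where "c = dec \<sigma> K \<alpha> B a b \<delta> x0 r i"
  define w where "w = Ufun \<sigma> K \<alpha> B a b \<delta> i + Uprime \<sigma> K \<alpha> \<delta> (Suc i)"
  define x where "x = emp_mean \<alpha> r (Suc i)"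
  have x: "\<bar>x - m\<bar> \<le> Uprime \<sigma> K \<alpha> \<delta> (Suc i)" using emp[of "Suc i"] by (simp add: x_def)
  have c: "\<bar>c - m\<bar> \<le> Ufun \<sigma> K \<alpha> B a b \<delta> i" using Suc by (simp add: c_def)
  have "c - w \<le> x" "x \<le> c + w" using x c unfolding w_def by linarith+
  then have "\<bar>quant (c - w) (c + w) B x - x\<bar> \<le> w / 2 ^ B"
    using quant_error_le[of "c - w" x "c + w" B] by simp
  moreover have "dec \<sigma> K \<alpha> B a b \<delta> x0 r (Suc i) = quant (c - w) (c + w) B x"
    by (simp add: c_def w_def x_def Let_def)
  moreover have "Ufun \<sigma> K \<alpha> B a b \<delta> (Suc i) = w / 2 ^ B + Uprime \<sigma> K \<alpha> \<delta> (Suc i)"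
    by (simp add: w_def add.commute)
  ultimately show ?case using x by linarith
qed

lemma emp_mean_deviation_if_dec_deviation:
  assumes "x0 \<in> {a..b}" "m \<in> {a..b}"
    and "\<bar>dec \<sigma> K \<alpha> B a b \<delta> x0 r i - m\<bar> > Ufun \<sigma> K \<alpha> B a b \<delta> i"
  shows "\<exists>i'. \<bar>emp_mean \<alpha> r (Suc i') - m\<bar> > Uprime \<sigma> K \<alpha> \<delta> (Suc i')"
proof (rule ccontr)
  assume "\<nexists>i'. \<bar>emp_mean \<alpha> r (Suc i') - m\<bar> > Uprime \<sigma> K \<alpha> \<delta> (Suc i')"
  then have "\<bar>emp_mean \<alpha> r i' - m\<bar> \<le> Uprime \<sigma> K \<alpha> \<delta> i'" if "i' \<ge> 1" for i'
    using that by (metis Suc_pred' not_le not_one_le_zero neq0_conv)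
  moreover have "\<bar>x0 - m\<bar> \<le> b - a" using assms(1,2) by (simp add: abs_le_iff)
  ultimately show False using dec_error_le_Ufun assms(3) by (meson not_le)
qed

lemma tlen_ge_two_pow:
  assumes "\<alpha> \<ge> 2"
  shows "2 ^ i \<le> tlen \<alpha> i"
  unfolding tlen_def using assms by (rule power_mono) simp

lemma Uprime_pos:
  assumes "\<sigma> > 0" "\<delta> > 0" "\<alpha> \<ge> 1" "\<delta> < 4 * real K * real (tlen \<alpha> i) ^ 2"
  shows "Uprime \<sigma> K \<alpha> \<delta> i > 0"
proof -
  have "tlen \<alpha> i > 0" using assms(3) by (simp add: tlen_def)
  then show ?thesis using assms unfolding Uprime_def by simp
qed

lemma subgaussian_tail_at_Uprime:
  fixes \<sigma> \<delta> :: real and K \<alpha> i :: nat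
  defines "t \<equiv> real (tlen \<alpha> i)"
  assumes "\<sigma> > 0" "\<delta> > 0" "\<alpha> \<ge> 1" "\<delta> \<le> 4 * real K * t ^ 2"
  shows "2 * exp (- (t * Uprime \<sigma> K \<alpha> \<delta> i ^ 2) / (2 * \<sigma> ^ 2)) = \<delta> / (2 * real K * t ^ 2)"
proof -
  define X where "X = 4 * real K * t ^ 2 / \<delta>"
  have t: "t > 0" using assms(4) by (simp add: t_def tlen_def)
  have X: "X \<ge> 1" using assms(3,5) by (simp add: X_def)
  have "Uprime \<sigma> K \<alpha> \<delta> i ^ 2 = \<sigma> ^ 2 * (2 * ln X / t)"
    using X t by (simp add: Uprime_def X_def t_def power_mult_distrib)
  then have "- (t * Uprime \<sigma> K \<alpha> \<delta> i ^ 2) / (2 * \<sigma> ^ 2) = - ln X"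
    using t assms(2) by (simp add: field_simps)
  then show ?thesis
    using X assms(3) by (simp add: exp_minus X_def field_simps)
qed

lemma borel_measurable_emp_mean:
  assumes "\<And>k. k \<ge> 1 \<Longrightarrow> r k \<in> borel_measurable M"
  shows "(\<lambda>\<omega>. emp_mean \<alpha> (\<lambda>k. r k \<omega>) i) \<in> borel_measurable M"
  unfolding emp_mean_def using assms by measurable

lemma (in prob_space) emp_mean_deviation_event:
  assumes "\<And>k. k \<ge> 1 \<Longrightarrow> r k \<in> borel_measurable M"
  shows "{\<omega> \<in> space M. c < \<bar>emp_mean \<alpha> (\<lambda>k. r k \<omega>) i - m\<bar>} \<in> events"
proof -
  have [measurable]: "(\<lambda>\<omega>. emp_mean \<alpha> (\<lambda>k. r k \<omega>) i) \<in> borel_measurable M"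
    using assms by (rule borel_measurable_emp_mean)
  show ?thesis by measurable
qed

lemma (in prob_space) expectation_in_interval:
  fixes X :: "'a \<Rightarrow> real"
  assumes "X \<in> borel_measurable M" "\<And>\<omega>. \<omega> \<in> space M \<Longrightarrow> X \<omega> \<in> {a..b}"
  shows "expectation X \<in> {a..b}"
proof -
  have "AE \<omega> in M. \<bar>X \<omega>\<bar> \<le> \<bar>a\<bar> + \<bar>b\<bar>"
    using assms(2) by (intro AE_I2) (smt (verit) atLeastAtMost_iff)
  then have "integrable M X"
    using assms(1) by (simp add: integrable_const_bound)
  then show ?thesis
    using assms(2) by (auto intro!: integral_ge_const integral_le_const)
qed

lemma (in prob_space) AE_in_interval_if_uniform:
  fixes a b :: real
  assumes "X \<in> borel_measurable M" "distr M lborel X = uniform_measure lborel {a..b}"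
  shows "AE \<omega> in M. X \<omega> \<in> {a..b}"
proof -
  have "AE x in distr M lborel X. x \<in> {a..b}"
    unfolding assms(2) by (rule AE_uniform_measureI) auto
  then show ?thesis using assms(1) by (subst (asm) AE_distr_iff) auto
qed

lemma (in finite_measure) measure_UN_le_sums:
  assumes "range A \<subseteq> sets M" "\<And>i. measure M (A i) \<le> f i" "f sums s"
  shows "measure M (\<Union>i. A i) \<le> s"
proof -
  have summable: "summable (\<lambda>i. measure M (A i))"
    using assms(2,3) by (intro summable_comparison_test'[OF sums_summable[OF assms(3)]]) auto
  have "measure M (\<Union>i. A i) \<le> (\<Sum>i. measure M (A i))"
    using assms(1) summable by (rule finite_measure_subadditive_countably)
  also have "\<dots> \<le> s"
    using suminf_le[OF assms(2) summable sums_summable[OF assms(3)]] sums_unique[OF assms(3)]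
    by simp
  finally show ?thesis .
qed

lemma (in prob_space) emp_mean_deviation_prob_le:
  assumes \<sigma>: "\<sigma> > 0" and \<delta>: "0 < \<delta>" "\<delta> < 1" and K: "K \<ge> 1" and \<alpha>: "\<alpha> \<ge> 2"
    and rv: "\<And>j k. j \<in> {1..K} \<Longrightarrow> k \<ge> 1 \<Longrightarrow> r j k \<in> borel_measurable M"
    and subg_mean: "\<And>j n t. j \<in> {1..K} \<Longrightarrow> n \<ge> 1 \<Longrightarrow> t > 0 \<Longrightarrow>
        prob {\<omega> \<in> space M. \<bar>(\<Sum>k = 1..n. r j k \<omega>) / real n - \<mu> j\<bar> > t}
          \<le> 2 * exp (- (real n * t ^ 2) / (2 * \<sigma> ^ 2))"
  shows "prob (\<Union>j\<in>{1..K}. {\<omega> \<in> space M.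
            \<bar>emp_mean \<alpha> (\<lambda>k. r j k \<omega>) i - \<mu> j\<bar> > Uprime \<sigma> K \<alpha> \<delta> i})
         \<le> \<delta> / 2 * (1/2) ^ i"
proof -
  define t where "t = real (tlen \<alpha> i)"
  have t: "2 ^ i \<le> t" using tlen_ge_two_pow[OF \<alpha>, of i] unfolding t_def
    by (metis of_nat_le_iff of_nat_numeral of_nat_power)
  have t1: "1 \<le> t" using t one_le_power[of "2::real" i] by linarith
  have "4 * 1 * 1 \<le> 4 * real K * t ^ 2" using K t1 by (intro mult_mono) auto
  with \<delta> have \<delta>_small: "\<delta> < 4 * real K * t ^ 2" by linarith
  have "prob (\<Union>j\<in>{1..K}. {\<omega> \<in> space M.
            \<bar>emp_mean \<alpha> (\<lambda>k. r j k \<omega>) i - \<mu> j\<bar> > Uprime \<sigma> K \<alpha> \<delta> i})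
        \<le> (\<Sum>j\<in>{1..K}. 2 * exp (- (t * Uprime \<sigma> K \<alpha> \<delta> i ^ 2) / (2 * \<sigma> ^ 2)))"
  proof (rule order_trans[OF finite_measure_subadditive_finite sum_mono])
    fix j assume j: "j \<in> {1..K}"
    show "prob {\<omega> \<in> space M. \<bar>emp_mean \<alpha> (\<lambda>k. r j k \<omega>) i - \<mu> j\<bar> > Uprime \<sigma> K \<alpha> \<delta> i}
        \<le> 2 * exp (- (t * Uprime \<sigma> K \<alpha> \<delta> i ^ 2) / (2 * \<sigma> ^ 2))"
      using subg_mean[OF j, of "tlen \<alpha> i" "Uprime \<sigma> K \<alpha> \<delta> i"] t1
        Uprime_pos[OF \<sigma> \<delta>(1) _ \<delta>_small[unfolded t_def]] \<alpha>
      by (simp add: emp_mean_def t_def)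
  qed (use rv emp_mean_deviation_event in auto)
  also have "\<dots> = \<delta> / (2 * t ^ 2)"
    using subgaussian_tail_at_Uprime[OF \<sigma> \<delta>(1), of \<alpha> K i] \<delta>_small \<alpha> K
    by (simp add: t_def)
  also have "\<dots> \<le> \<delta> / 2 * (1/2) ^ i"
  proof -
    have "t \<le> t ^ 2" using mult_left_mono[OF t1, of t] t1 by (simp add: power2_eq_square)
    with t have "2 ^ i \<le> t ^ 2" by linarith
    moreover have "0 < t ^ 2" using t1 by simp
    ultimately have "1 / t ^ 2 \<le> 1 / 2 ^ i" by (intro divide_left_mono) auto
    then have "\<delta> / 2 * (1 / t ^ 2) \<le> \<delta> / 2 * (1 / 2 ^ i)" using \<delta> by (intro mult_left_mono) auto
    then show ?thesis by (simp add: power_one_over)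
  qed
  finally show ?thesis .
qed

theorem lemma2:
  fixes M :: "'w measure"
    and K B \<alpha> :: nat
    and a b \<sigma> \<delta> :: real
    and r :: "nat \<Rightarrow> nat \<Rightarrow> 'w \<Rightarrow> real"
    and \<mu> :: "nat \<Rightarrow> real"
    and x0 :: "nat \<Rightarrow> 'w \<Rightarrow> real"
  assumes P: "prob_space M"
    and K: "K \<ge> 1" and B: "B \<ge> 1" and \<alpha>: "\<alpha> \<ge> 2"
    and ab: "a < b" and \<sigma>: "\<sigma> > 0" and \<delta>: "\<delta> > 0"
    and rv: "\<And>j k. j \<in> {1..K} \<Longrightarrow> k \<ge> 1 \<Longrightarrow> r j k \<in> borel_measurable M"
    and range: "\<And>j k \<omega>. j \<in> {1..K} \<Longrightarrow> k \<ge> 1 \<Longrightarrow> \<omega> \<in> space M \<Longrightarrow> r j k \<omega> \<in> {a..b}"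
    and indep: "prob_space.indep_vars M (\<lambda>_. borel) (\<lambda>(j, k). r j k) ({1..K} \<times> {1..})"
    and ident: "\<And>j k. j \<in> {1..K} \<Longrightarrow> k \<ge> 1 \<Longrightarrow> distr M borel (r j k) = distr M borel (r j 1)"
    and mean: "\<And>j k. j \<in> {1..K} \<Longrightarrow> k \<ge> 1 \<Longrightarrow> prob_space.expectation M (r j k) = \<mu> j"
    and subg: "\<And>j k t. j \<in> {1..K} \<Longrightarrow> k \<ge> 1 \<Longrightarrow> t > 0 \<Longrightarrow>
        measure M {\<omega> \<in> space M. \<bar>r j k \<omega> - \<mu> j\<bar> > t} \<le> 2 * exp (- (t ^ 2) / (2 * \<sigma> ^ 2))"
    and subg_mean: "\<And>j n t. j \<in> {1..K} \<Longrightarrow> n \<ge> 1 \<Longrightarrow> t > 0 \<Longrightarrow>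
        measure M {\<omega> \<in> space M. \<bar>(\<Sum>k = 1..n. r j k \<omega>) / real n - \<mu> j\<bar> > t}
          \<le> 2 * exp (- (real n * t ^ 2) / (2 * \<sigma> ^ 2))"
    and x0_rv: "\<And>j. j \<in> {1..K} \<Longrightarrow> x0 j \<in> borel_measurable M"
    and x0_unif: "\<And>j. j \<in> {1..K} \<Longrightarrow> distr M lborel (x0 j) = uniform_measure lborel {a..b}"
  shows "measure M {\<omega> \<in> space M. \<exists>j \<in> {1..K}. \<exists>i \<ge> 1.
            \<bar>dec \<sigma> K \<alpha> B a b \<delta> (x0 j \<omega>) (\<lambda>k. r j k \<omega>) i - \<mu> j\<bar> > Ufun \<sigma> K \<alpha> B a b \<delta> i}
         \<le> \<delta>"
proof -
  interpret prob_space M by (rule P)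
  let ?bad = "{\<omega> \<in> space M. \<exists>j \<in> {1..K}. \<exists>i \<ge> 1.
     \<bar>dec \<sigma> K \<alpha> B a b \<delta> (x0 j \<omega>) (\<lambda>k. r j k \<omega>) i - \<mu> j\<bar> > Ufun \<sigma> K \<alpha> B a b \<delta> i}"
  show ?thesis
  proof (cases "\<delta> < 1")
    case False
    then show ?thesis using prob_le_1[of ?bad] by linarith
  next
    case True
    define F where "F i = (\<Union>j\<in>{1..K}. {\<omega> \<in> space M.
       \<bar>emp_mean \<alpha> (\<lambda>k. r j k \<omega>) (Suc i) - \<mu> j\<bar> > Uprime \<sigma> K \<alpha> \<delta> (Suc i)})" for i
    have F_events: "range F \<subseteq> events"
      using rv by (auto simp: F_def intro!: emp_mean_deviation_event)
    have \<mu>: "\<mu> j \<in> {a..b}" if j: "j \<in> {1..K}" for j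
      using mean[OF j order_refl] expectation_in_interval[OF rv[OF j order_refl] range[OF j order_refl]]
      by simp
    have "AE \<omega> in M. \<forall>j\<in>{1..K}. x0 j \<omega> \<in> {a..b}"
      using x0_rv x0_unif by (intro AE_finite_allI AE_in_interval_if_uniform) auto
    then have "AE \<omega> in M. \<omega> \<in> ?bad \<longrightarrow> \<omega> \<in> (\<Union>i. F i)"
    proof (eventually_elim, intro impI)
      case (elim \<omega>)
      assume "\<omega> \<in> ?bad"
      then obtain j i where j: "j \<in> {1..K}" and \<omega>: "\<omega> \<in> space M" and
        "\<bar>dec \<sigma> K \<alpha> B a b \<delta> (x0 j \<omega>) (\<lambda>k. r j k \<omega>) i - \<mu> j\<bar> > Ufun \<sigma> K \<alpha> B a b \<delta> i"
        by auto
      with elim \<mu>[OF j] have "\<exists>i'. \<bar>emp_mean \<alpha> (\<lambda>k. r j k \<omega>) (Suc i') - \<mu> j\<bar> > Uprime \<sigma> K \<alpha> \<delta> (Suc i')"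
        by (intro emp_mean_deviation_if_dec_deviation) auto
      then show "\<omega> \<in> (\<Union>i. F i)" using j \<omega> unfolding F_def by blast
    qed
    then have "prob ?bad \<le> prob (\<Union>i. F i)"
      using F_events by (intro finite_measure_mono_AE) auto
    also have "\<dots> \<le> \<delta> / 2 * 1"
    proof (rule measure_UN_le_sums[OF F_events _ sums_mult[OF power_half_series]])
      show "prob (F i) \<le> \<delta> / 2 * (1/2) ^ Suc i" for i
        unfolding F_def by (rule emp_mean_deviation_prob_le[OF \<sigma> \<delta> True K \<alpha>]) (use rv subg_mean in auto)
    qed
    finally show ?thesis using \<delta> by linarith
  qed
qed

end
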